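(* Let $V$ and $W$ be finite-dimensional simple Yetter-Drinfeld modules over $H=B(n,w,\gamma)$. Then $V\cong W$ if and only if there exist $\alpha,\beta\in\Bbbk^*$ and $r,i\in\mathbb{Z}$ such that both $V$ and $W$ contain a standard element of type $(\alpha,\beta,x^rg^i)$.
   Context: $\Bbbk$ is an algebraically closed field of characteristic $0$; $n,w$ positive integers, $\gamma$ a primitive $n$-th root of unity. $H=B(n,w,\gamma)$ is the Hopf algebra generated by $x^{\pm1},g,y$ with relations $xx^{-1}=x^{-1}x=1$, $xg=gx$, $xy=yx$, $yg=\gamma gy$, $y^n=1-x^w=1-g^n$, with $\Delta(x)=x\otimes x$, $\Delta(g)=g\otimes g$, $\Delta(y)=y\otimes g+1\otimes y$, $\varepsilon(x)=\varepsilon(g)=1$, $\varepsilon(y)=0$, $S(x)=x^{-1}$, $S(g)=g^{-1}$, $S(y)=-yg^{-1}$; $G(H)=\{g^jx^k\}$. A (left-left) Yetter-Drinfeld module is a left $H$-module, left $H$-comodule $(V,\cdot,\delta)$ with $\delta(h\cdot v)=h_{(1)}v_{(-1)}S(h_{(3)})\otimes h_{(2)}\cdot v_{(0)}$; simple means no nonzero proper Yetter-Drinfeld submodules; isomorphism means isomorphism of Yetter-Drinfeld modules. A nonzero $v\in V$ is a standard element of type $(\alpha,\beta,h)$ if $h\in G(H)$, $\alpha,\beta\in\Bbbk^*$, $x\cdot v=\alpha v$, $g\cdot v=\beta v$, $\delta(v)=h\otimes v$. *)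

theory Defs
  imports "HOL-Computational_Algebra.Polynomial"
begin

text \<open>H has the k-basis x^k g^j y^l (k integer, 0 <= j,l < n); an element of H is
  represented by its coefficient function on index triples (k,j,l).
  Elements of H (x) H are coefficient functions on pairs of such triples.\<close>

type_synonym idx = "int \<times> nat \<times> nat"

definition valid_idx :: "nat \<Rightarrow> idx \<Rightarrow> bool" where
  "valid_idx n p \<longleftrightarrow> fst (snd p) < n \<and> snd (snd p) < n"

definition fsupp :: "('a \<Rightarrow> 'b::zero) \<Rightarrow> 'a set" where
  "fsupp f = {p. f p \<noteq> 0}"

definition bsingle :: "'a \<Rightarrow> 'b::zero \<Rightarrow> 'a \<Rightarrow> 'b" where
  "bsingle p c = (\<lambda>q. if q = p then c else 0)"

text \<open>Product of basis elements: (x^k g^j y^l)(x^k' g^j' y^l')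
  = gamma^(l j') x^(k+k') g^(j+j') y^(l+l'), reduced using g^n = x^w, y^n = 1 - x^w.\<close>
definition mono_mult :: "nat \<Rightarrow> nat \<Rightarrow> 'k::field \<Rightarrow> idx \<Rightarrow> idx \<Rightarrow> idx \<Rightarrow> 'k" where
  "mono_mult n w \<gamma> p p' = (case p of (k, j, l) \<Rightarrow> case p' of (k', j', l') \<Rightarrow>
     let c = \<gamma> ^ (l * j'); a = j + j'; b = l + l';
         K = k + k' + (if a < n then 0 else int w);
         a' = (if a < n then a else a - n)
     in if b < n then bsingle (K, a', b) c
        else (\<lambda>t. bsingle (K, a', b - n) c t - bsingle (K + int w, a', b - n) c t))"

definition hmult :: "nat \<Rightarrow> nat \<Rightarrow> 'k::field \<Rightarrow> (idx \<Rightarrow> 'k) \<Rightarrow> (idx \<Rightarrow> 'k) \<Rightarrow> idx \<Rightarrow> 'k" where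
  "hmult n w \<gamma> a b = (\<lambda>t. \<Sum>p\<in>fsupp a. \<Sum>q\<in>fsupp b. a p * b q * mono_mult n w \<gamma> p q t)"

definition hbasis :: "idx \<Rightarrow> idx \<Rightarrow> 'k::field" where
  "hbasis p = bsingle p 1"

definition hone :: "idx \<Rightarrow> 'k::field" where
  "hone = bsingle (0, 0, 0) 1"

fun hpow :: "nat \<Rightarrow> nat \<Rightarrow> 'k::field \<Rightarrow> (idx \<Rightarrow> 'k) \<Rightarrow> nat \<Rightarrow> idx \<Rightarrow> 'k" where
  "hpow n w \<gamma> a 0 = hone"
| "hpow n w \<gamma> a (Suc m) = hmult n w \<gamma> a (hpow n w \<gamma> a m)"

text \<open>Index of the group-like x^r g^i (r, i integers), using g^n = x^w.\<close>
definition gidx :: "nat \<Rightarrow> nat \<Rightarrow> int \<Rightarrow> int \<Rightarrow> idx" where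
  "gidx n w r i = (r + int w * (i div int n), nat (i mod int n), 0)"

definition hgl :: "nat \<Rightarrow> nat \<Rightarrow> int \<Rightarrow> int \<Rightarrow> idx \<Rightarrow> 'k::field" where
  "hgl n w r i = bsingle (gidx n w r i) 1"

definition hx :: "nat \<Rightarrow> nat \<Rightarrow> idx \<Rightarrow> 'k::field" where "hx n w = hgl n w 1 0"
definition hxinv :: "nat \<Rightarrow> nat \<Rightarrow> idx \<Rightarrow> 'k::field" where "hxinv n w = hgl n w (-1) 0"
definition hg :: "nat \<Rightarrow> nat \<Rightarrow> idx \<Rightarrow> 'k::field" where "hg n w = hgl n w 0 1"
definition hginv :: "nat \<Rightarrow> nat \<Rightarrow> idx \<Rightarrow> 'k::field" where "hginv n w = hgl n w 0 (-1)"

text \<open>y; when n = 1 the relation y = y^1 = 1 - x^w is used.\<close>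
definition hy :: "nat \<Rightarrow> nat \<Rightarrow> idx \<Rightarrow> 'k::field" where
  "hy n w = (if 1 < n then bsingle (0, 0, 1) 1
             else (\<lambda>t. bsingle (0, 0, 0) 1 t - bsingle (int w, 0, 0) 1 t))"

text \<open>Antipode on basis: S(x^k g^j y^l) = S(y)^l S(g)^j S(x)^k,
  with S(y) = - y g^-1, S(g) = g^-1, S(x) = x^-1.\<close>
definition hS :: "nat \<Rightarrow> nat \<Rightarrow> 'k::field \<Rightarrow> idx \<Rightarrow> idx \<Rightarrow> 'k" where
  "hS n w \<gamma> p = (case p of (k, j, l) \<Rightarrow>
     hmult n w \<gamma> (hpow n w \<gamma> (\<lambda>t. - hmult n w \<gamma> (hy n w) (hginv n w) t) l)
       (hmult n w \<gamma> (hpow n w \<gamma> (hginv n w) j) (hgl n w (-k) 0)))"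

definition heps :: "idx \<Rightarrow> 'k::field" where
  "heps p = (if snd (snd p) = 0 then 1 else 0)"

definition ttensor :: "(idx \<Rightarrow> 'k::field) \<Rightarrow> (idx \<Rightarrow> 'k) \<Rightarrow> idx \<times> idx \<Rightarrow> 'k" where
  "ttensor a b = (\<lambda>(s, t). a s * b t)"

definition tmult :: "nat \<Rightarrow> nat \<Rightarrow> 'k::field \<Rightarrow> (idx \<times> idx \<Rightarrow> 'k) \<Rightarrow> (idx \<times> idx \<Rightarrow> 'k) \<Rightarrow> idx \<times> idx \<Rightarrow> 'k" where
  "tmult n w \<gamma> A B = (\<lambda>(s, t). \<Sum>(p1, p2)\<in>fsupp A. \<Sum>(q1, q2)\<in>fsupp B.
      A (p1, p2) * B (q1, q2) * mono_mult n w \<gamma> p1 q1 s * mono_mult n w \<gamma> p2 q2 t)"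

definition tone :: "idx \<times> idx \<Rightarrow> 'k::field" where
  "tone = bsingle ((0, 0, 0), (0, 0, 0)) 1"

fun tpow :: "nat \<Rightarrow> nat \<Rightarrow> 'k::field \<Rightarrow> (idx \<times> idx \<Rightarrow> 'k) \<Rightarrow> nat \<Rightarrow> idx \<times> idx \<Rightarrow> 'k" where
  "tpow n w \<gamma> A 0 = tone"
| "tpow n w \<gamma> A (Suc m) = tmult n w \<gamma> A (tpow n w \<gamma> A m)"

text \<open>Coproduct on basis: Delta(x^k g^j y^l) = Delta(x)^k Delta(g)^j Delta(y)^l, with
  Delta(x) = x (x) x, Delta(g) = g (x) g, Delta(y) = y (x) g + 1 (x) y.\<close>
definition hDelta :: "nat \<Rightarrow> nat \<Rightarrow> 'k::field \<Rightarrow> idx \<Rightarrow> idx \<times> idx \<Rightarrow> 'k" where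
  "hDelta n w \<gamma> p = (case p of (k, j, l) \<Rightarrow>
     tmult n w \<gamma>
       (if 0 \<le> k then tpow n w \<gamma> (ttensor (hx n w) (hx n w)) (nat k)
        else tpow n w \<gamma> (ttensor (hxinv n w) (hxinv n w)) (nat (- k)))
       (tmult n w \<gamma> (tpow n w \<gamma> (ttensor (hg n w) (hg n w)) j)
          (tpow n w \<gamma> (\<lambda>st. ttensor (hy n w) (hg n w) st + ttensor hone (hy n w) st) l)))"

definition hact :: "('k::field \<Rightarrow> 'v \<Rightarrow> 'v) \<Rightarrow> (idx \<Rightarrow> 'v \<Rightarrow> 'v) \<Rightarrow> (idx \<Rightarrow> 'k) \<Rightarrow> 'v \<Rightarrow> 'v::ab_group_add" where
  "hact scale act a v = (\<Sum>p\<in>fsupp a. scale (a p) (act p v))"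

text \<open>A left-left Yetter-Drinfeld module over H on the k-vector space ('v, scale):
  act p is the action of the basis element p; the coaction is
  delta(v) = sum_t (basis t) (x) co v t.\<close>
definition is_YD :: "nat \<Rightarrow> nat \<Rightarrow> 'k::field \<Rightarrow> ('k \<Rightarrow> 'v::ab_group_add \<Rightarrow> 'v)
    \<Rightarrow> (idx \<Rightarrow> 'v \<Rightarrow> 'v) \<Rightarrow> ('v \<Rightarrow> idx \<Rightarrow> 'v) \<Rightarrow> bool" where
  "is_YD n w \<gamma> scale act co \<longleftrightarrow>
     vector_space scale \<and>
     (\<forall>p. valid_idx n p \<longrightarrow> Vector_Spaces.linear scale scale (act p)) \<and>
     (\<forall>t. Vector_Spaces.linear scale scale (\<lambda>v. co v t)) \<and>
     (\<forall>v. act (0, 0, 0) v = v) \<and>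
     (\<forall>p q v. valid_idx n p \<longrightarrow> valid_idx n q \<longrightarrow>
        act p (act q v) = hact scale act (mono_mult n w \<gamma> p q) v) \<and>
     (\<forall>v. finite (fsupp (co v)) \<and> fsupp (co v) \<subseteq> {t. valid_idx n t}) \<and>
     (\<forall>v. (\<Sum>t\<in>fsupp (co v). scale (heps t) (co v t)) = v) \<and>
     (\<forall>v s t. (\<Sum>p\<in>fsupp (co v). scale (hDelta n w \<gamma> p (s, t)) (co v p)) = co (co v s) t) \<and>
     (\<forall>p v t. valid_idx n p \<longrightarrow>
        co (act p v) t =
          (\<Sum>(a, b)\<in>fsupp (hDelta n w \<gamma> p). \<Sum>(a1, a2)\<in>fsupp (hDelta n w \<gamma> a).
             \<Sum>q\<in>fsupp (co v).
               scale (hDelta n w \<gamma> p (a, b) * hDelta n w \<gamma> a (a1, a2) *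
                      hmult n w \<gamma> (hmult n w \<gamma> (hbasis a1) (hbasis q)) (hS n w \<gamma> b) t)
                     (act a2 (co v q))))"

definition YD_submodule :: "nat \<Rightarrow> ('k::field \<Rightarrow> 'v::ab_group_add \<Rightarrow> 'v)
    \<Rightarrow> (idx \<Rightarrow> 'v \<Rightarrow> 'v) \<Rightarrow> ('v \<Rightarrow> idx \<Rightarrow> 'v) \<Rightarrow> 'v set \<Rightarrow> bool" where
  "YD_submodule n scale act co U \<longleftrightarrow>
     module.subspace scale U \<and>
     (\<forall>p v. valid_idx n p \<longrightarrow> v \<in> U \<longrightarrow> act p v \<in> U) \<and>
     (\<forall>v t. v \<in> U \<longrightarrow> co v t \<in> U)"

definition YD_simple :: "nat \<Rightarrow> ('k::field \<Rightarrow> 'v::ab_group_add \<Rightarrow> 'v)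
    \<Rightarrow> (idx \<Rightarrow> 'v \<Rightarrow> 'v) \<Rightarrow> ('v \<Rightarrow> idx \<Rightarrow> 'v) \<Rightarrow> bool" where
  "YD_simple n scale act co \<longleftrightarrow>
     (UNIV :: 'v set) \<noteq> {0} \<and>
     (\<forall>U. YD_submodule n scale act co U \<longrightarrow> U = {0} \<or> U = UNIV)"

definition fin_dim :: "('k::field \<Rightarrow> 'v::ab_group_add \<Rightarrow> 'v) \<Rightarrow> bool" where
  "fin_dim scale \<longleftrightarrow> (\<exists>B. finite B \<and> module.span scale B = UNIV)"

definition YD_iso :: "nat \<Rightarrow> ('k::field \<Rightarrow> 'v::ab_group_add \<Rightarrow> 'v) \<Rightarrow> (idx \<Rightarrow> 'v \<Rightarrow> 'v) \<Rightarrow> ('v \<Rightarrow> idx \<Rightarrow> 'v)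
    \<Rightarrow> ('k \<Rightarrow> 'u::ab_group_add \<Rightarrow> 'u) \<Rightarrow> (idx \<Rightarrow> 'u \<Rightarrow> 'u) \<Rightarrow> ('u \<Rightarrow> idx \<Rightarrow> 'u) \<Rightarrow> bool" where
  "YD_iso n sV actV coV sW actW coW \<longleftrightarrow>
     (\<exists>f. bij f \<and> Vector_Spaces.linear sV sW f \<and>
        (\<forall>p v. valid_idx n p \<longrightarrow> f (actV p v) = actW p (f v)) \<and>
        (\<forall>v t. f (coV v t) = coW (f v) t))"

definition standard_elem :: "nat \<Rightarrow> nat \<Rightarrow> ('k::field \<Rightarrow> 'v::ab_group_add \<Rightarrow> 'v) \<Rightarrow> (idx \<Rightarrow> 'v \<Rightarrow> 'v)
    \<Rightarrow> ('v \<Rightarrow> idx \<Rightarrow> 'v) \<Rightarrow> 'k \<Rightarrow> 'k \<Rightarrow> int \<Rightarrow> int \<Rightarrow> 'v \<Rightarrow> bool" where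
  "standard_elem n w scale act co \<alpha> \<beta> r i v \<longleftrightarrow>
     v \<noteq> 0 \<and> \<alpha> \<noteq> 0 \<and> \<beta> \<noteq> 0 \<and>
     hact scale act (hx n w) v = scale \<alpha> v \<and>
     hact scale act (hg n w) v = scale \<beta> v \<and>
     co v = bsingle (gidx n w r i) v"

definition alg_closed :: "'k::field itself \<Rightarrow> bool" where
  "alg_closed _ \<longleftrightarrow> (\<forall>p :: 'k poly. 0 < degree p \<longrightarrow> (\<exists>z. poly p z = 0))"

definition primitive_root :: "nat \<Rightarrow> 'k::field \<Rightarrow> bool" where
  "primitive_root n \<gamma> \<longleftrightarrow> \<gamma> ^ n = 1 \<and> (\<forall>m. 0 < m \<and> m < n \<longrightarrow> \<gamma> ^ m \<noteq> 1)"

end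

(* Every nonzero finite-dimensional Yetter-Drinfeld module over H contains a standard element:
   since Delta respects the y-degree, coassociativity shows that the coefficient of top y-degree
   in the coaction of a nonzero vector has its coaction supported on group-likes; a coefficient of
   that coaction is homogeneous of some group-like degree x^r g^i; and x and g preserve this
   homogeneous component and commute, so they have a common eigenvector in it (k is algebraically
   closed).  Isomorphisms carry standard elements to standard elements of the same type.

   Conversely, let v in V and u in W be standard of the same type (alpha, beta, x^r g^i) and put
   z = (v, u) in V (+) W.  As delta(z) = x^r g^i (x) z, the submodule Hz is a Yetter-Drinfeld
   submodule.  It is spanned by the y^l z (0 <= l < n), on which g acts by the pairwise distinct
   scalars beta gamma^-l, so its beta-eigenvectors for g are multiples of z; in particular
   (v, 0) is not in Hz.  By simplicity of V and W, Hz is the graph of an isomorphism V -> W. *)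

theory Submission
  imports Defs "HOL-Library.Product_Plus"
begin

section \<open>Polynomials in a linear operator and eigenvectors\<close>

lemmas linear_map_0 = module_hom.zero[OF module_hom_linearI]
  and linear_map_add = module_hom.add[OF module_hom_linearI]
  and linear_map_scale = module_hom.scale[OF module_hom_linearI]
  and linear_map_sum = module_hom.sum[OF module_hom_linearI]

definition poly_apply ::
    "('k::field \<Rightarrow> 'v \<Rightarrow> 'v) \<Rightarrow> ('v \<Rightarrow> 'v) \<Rightarrow> 'k poly \<Rightarrow> 'v \<Rightarrow> 'v::comm_monoid_add" where
  "poly_apply s T p x = (\<Sum>i\<le>degree p. s (coeff p i) ((T ^^ i) x))"

context vector_space
begin

lemma linear_span_stable:
  assumes "Vector_Spaces.linear scale scale T" "T ` B \<subseteq> span B"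
  shows "T ` span B \<subseteq> span B"
  using assms by (metis module_hom.span_image module_hom_linearI span_mono span_span)

lemma poly_apply_upto:
  assumes "degree p \<le> N"
  shows "poly_apply scale T p x = (\<Sum>i\<le>N. scale (coeff p i) ((T ^^ i) x))"
  unfolding poly_apply_def
  by (rule sum.mono_neutral_left) (use assms in \<open>auto simp: coeff_eq_0\<close>)

lemma poly_apply_linear_factor:
  assumes T: "Vector_Spaces.linear scale scale T"
  shows "poly_apply scale T ([:-z, 1:] * q) x =
    T (poly_apply scale T q x) - scale z (poly_apply scale T q x)"
proof -
  define d where "d = degree q"
  have deg: "degree ([:-z, 1:] * q) \<le> Suc d"
    unfolding d_def by (rule order_trans[OF degree_mult_le]) simp
  have coeff: "coeff ([:-z, 1:] * q) i = (if i = 0 then 0 else coeff q (i - 1)) - z * coeff q i"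
    for i
    by (cases i) simp_all
  have "poly_apply scale T ([:-z, 1:] * q) x
      = (\<Sum>i\<le>Suc d. scale (if i = 0 then 0 else coeff q (i - 1)) ((T ^^ i) x))
        - (\<Sum>i\<le>Suc d. scale (z * coeff q i) ((T ^^ i) x))"
    unfolding poly_apply_upto[OF deg] coeff by (simp add: scale_left_diff_distrib sum_subtractf)
  also have "(\<Sum>i\<le>Suc d. scale (if i = 0 then 0 else coeff q (i - 1)) ((T ^^ i) x))
      = T (\<Sum>i\<le>d. scale (coeff q i) ((T ^^ i) x))"
    by (subst sum.atMost_Suc_shift) (simp add: linear_map_scale[OF T] linear_map_sum[OF T])
  also have "(\<Sum>i\<le>Suc d. scale (z * coeff q i) ((T ^^ i) x)) =
      scale z (\<Sum>i\<le>d. scale (coeff q i) ((T ^^ i) x))"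
    by (simp add: scale_sum_right d_def coeff_eq_0)
  finally show ?thesis by (simp add: poly_apply_def d_def)
qed

lemma poly_apply_eigenvector:
  assumes T: "Vector_Spaces.linear scale scale T" and y: "T y = scale \<mu> y"
  shows "poly_apply scale T p y = scale (poly p \<mu>) y"
proof -
  have pow: "(T ^^ i) y = scale (\<mu> ^ i) y" for i
    by (induction i) (simp_all add: y linear_map_scale[OF T] mult.commute)
  show ?thesis
    by (simp add: poly_apply_def pow poly_altdef scale_sum_left mult.commute)
qed

lemma linear_poly_apply:
  assumes T: "Vector_Spaces.linear scale scale T"
  shows "Vector_Spaces.linear scale scale (poly_apply scale T p)"
proof -
  have pow: "Vector_Spaces.linear scale scale (T ^^ i)" for i
  proof (induction i)
    case (Suc i)
    then show ?case using Vector_Spaces.linear_compose[OF Suc.IH T] by (simp add: comp_def)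
  qed (simp add: linear_ident)
  show ?thesis
    unfolding Vector_Spaces.linear_iff poly_apply_def
    using linear_map_add[OF pow] linear_map_scale[OF pow]
    by (simp add: vector_space_axioms scale_right_distrib sum.distrib scale_sum_right mult.commute)
qed

lemma exists_nontrivial_relation:
  assumes B: "finite B" "span B = UNIV"
  shows "\<exists>c::nat \<Rightarrow> 'a. (\<exists>k\<le>card B. c k \<noteq> 0) \<and> (\<Sum>k\<le>card B. scale (c k) (f k)) = 0"
proof (cases "inj_on f {..card B}")
  case True
  have "dependent (f ` {..card B})"
  proof (rule ccontr)
    assume "\<not> dependent (f ` {..card B})"
    then have "card (f ` {..card B}) \<le> card B"
      using independent_span_bound[OF B(1)] B(2) by auto
    then show False using True by (simp add: card_image)
  qed
  then obtain c where c: "\<exists>v\<in>f ` {..card B}. c v \<noteq> 0" "(\<Sum>v\<in>f ` {..card B}. scale (c v) v) = 0"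
    using dependent_finite[of "f ` {..card B}"] by auto
  then show ?thesis
    using sum.reindex[OF True, of "\<lambda>v. scale (c v) v"] by (intro exI[of _ "c \<circ> f"]) auto
next
  case False
  then obtain i j where ij: "i \<le> card B" "j \<le> card B" "i \<noteq> j" "f i = f j"
    unfolding inj_on_def by auto
  define c :: "nat \<Rightarrow> 'a" where "c k = (if k = i then 1 else if k = j then -1 else 0)" for k
  have "(\<Sum>k\<le>card B. scale (c k) (f k)) = (\<Sum>k\<in>{i, j}. scale (c k) (f k))"
    by (rule sum.mono_neutral_right) (use ij(1,2) in \<open>auto simp: c_def\<close>)
  also have "\<dots> = scale 1 (f i) + scale (-1) (f j)"
    using ij(3) by (simp add: c_def)
  also have "\<dots> = 0" using ij(4) by simp
  finally have "(\<Sum>k\<le>card B. scale (c k) (f k)) = 0" .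
  moreover have "c i \<noteq> 0" by (simp add: c_def)
  ultimately show ?thesis using ij(1) by (intro exI[of _ c] conjI) auto
qed

lemma poly_apply_root_eigenvector:
  assumes ac: "alg_closed TYPE('a)" and T: "Vector_Spaces.linear scale scale T"
    and U: "subspace U" "T ` U \<subseteq> U"
  shows "p \<noteq> 0 \<Longrightarrow> x \<in> U \<Longrightarrow> x \<noteq> 0 \<Longrightarrow> poly_apply scale T p x = 0 \<Longrightarrow>
    \<exists>y\<in>U. y \<noteq> 0 \<and> (\<exists>c. T y = scale c y)"
proof (induction "degree p" arbitrary: p rule: less_induct)
  case less
  show ?case
  proof (cases "degree p = 0")
    case True
    then obtain c where "p = [:c:]" by (metis degree_eq_zeroE)
    then show ?thesis using less.prems by (simp add: poly_apply_def)
  next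
    case False
    then obtain z where "poly p z = 0" using ac unfolding alg_closed_def by blast
    then obtain q where pq: "p = [:-z, 1:] * q" by (metis dvdE poly_eq_0_iff_dvd)
    have q: "q \<noteq> 0" using less.prems(1) pq by auto
    have "degree p = Suc (degree q)" unfolding pq by (subst degree_mult_eq) (use q in auto)
    then have deg: "degree q < degree p" by simp
    define y where "y = poly_apply scale T q x"
    have Ty: "T y = scale z y"
      using poly_apply_linear_factor[OF T, of z q x] less.prems(4) by (simp add: pq y_def)
    have "(T ^^ i) x \<in> U" for i by (induction i) (use less.prems(2) U(2) in auto)
    then have "y \<in> U" unfolding y_def poly_apply_def
      by (intro subspace_sum[OF U(1)] subspace_scale[OF U(1)])
    show ?thesis
    proof (cases "y = 0")
      case True
      then show ?thesis using less.hyps[OF deg q less.prems(2,3)] by (simp add: y_def)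
    next
      case False
      then show ?thesis using \<open>y \<in> U\<close> Ty by blast
    qed
  qed
qed

lemma exists_eigenvector:
  assumes ac: "alg_closed TYPE('a)" and B: "finite B" "span B = UNIV"
    and T: "Vector_Spaces.linear scale scale T" and U: "subspace U" "T ` U \<subseteq> U" "U \<noteq> {0}"
  shows "\<exists>y\<in>U. y \<noteq> 0 \<and> (\<exists>c. T y = scale c y)"
proof -
  obtain x where x: "x \<in> U" "x \<noteq> 0" using U(1,3) subspace_0 by blast
  obtain c where c: "\<exists>k\<le>card B. c k \<noteq> 0" "(\<Sum>k\<le>card B. scale (c k) ((T ^^ k) x)) = 0"
    using exists_nontrivial_relation[OF B, of "\<lambda>k. (T ^^ k) x"] by blast
  define p where "p = (\<Sum>k\<le>card B. monom (c k) k)"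
  have coeff_p: "coeff p i = (if i \<le> card B then c i else 0)" for i
    unfolding p_def by (simp add: coeff_sum)
  obtain k where "k \<le> card B" "c k \<noteq> 0" using c(1) by blast
  then have "coeff p k \<noteq> 0" by (simp add: coeff_p)
  then have "p \<noteq> 0" by auto
  moreover have "degree p \<le> card B" by (rule degree_le) (simp add: coeff_p)
  then have "poly_apply scale T p x = 0"
    using c(2) by (simp add: poly_apply_upto coeff_p)
  ultimately show ?thesis using poly_apply_root_eigenvector[OF ac T U(1,2) _ x] by blast
qed

lemma common_eigenvector:
  assumes ac: "alg_closed TYPE('a)" and B: "finite B" "span B = UNIV"
    and S: "Vector_Spaces.linear scale scale S" and T: "Vector_Spaces.linear scale scale T"
    and ST: "\<And>x. S (T x) = T (S x)"
    and U: "subspace U" "S ` U \<subseteq> U" "T ` U \<subseteq> U" "U \<noteq> {0}"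
  shows "\<exists>y\<in>U. y \<noteq> 0 \<and> (\<exists>a. S y = scale a y) \<and> (\<exists>b. T y = scale b y)"
proof -
  obtain y a where y: "y \<in> U" "y \<noteq> 0" "S y = scale a y"
    using exists_eigenvector[OF ac B S U(1,2,4)] by blast
  define E where "E = {x \<in> U. S x = scale a x}"
  have E: "subspace E"
    using U(1) linear_map_0[OF S] linear_map_add[OF S] linear_map_scale[OF S]
    by (auto simp: subspace_def E_def scale_right_distrib scale_left_commute)
  moreover have "T ` E \<subseteq> E"
    using U(3) ST linear_map_scale[OF T] by (auto simp: E_def)
  moreover have "E \<noteq> {0}" using y by (auto simp: E_def)
  ultimately obtain z b where z: "z \<in> E" "z \<noteq> 0" "T z = scale b z"
    using exists_eigenvector[OF ac B T E] by blast
  then show ?thesis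
    by (intro bexI[of _ z] conjI exI[of _ a] exI[of _ b]) (simp_all add: E_def)
qed

end

section \<open>Group-likes and the y-grading of the coproduct\<close>

abbreviation ydeg :: "idx \<Rightarrow> nat" where
  "ydeg p \<equiv> snd (snd p)"

lemma fsupp_bsingle: "c \<noteq> 0 \<Longrightarrow> fsupp (bsingle p c) = {p}"
  by (auto simp: fsupp_def bsingle_def)

lemma gidx_eqI:
  assumes "j < n" "i = q * int n + int j"
  shows "gidx n w r i = (r + int w * q, j, 0)"
proof -
  have "i div int n = q" "i mod int n = int j"
    using assms by (simp_all add: div_mult_self3 mod_mult_self3)
  then show ?thesis by (simp add: gidx_def)
qed

lemma gidx_eq: "j < n \<Longrightarrow> gidx n w k (int j) = (k, j, 0)"
  using gidx_eqI[of j n "int j" 0] by simp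

lemma gidx_0_0: "gidx n w 0 0 = (0, 0, 0)"
  by (simp add: gidx_def)

lemma gidx_cases:
  assumes "0 < n"
  obtains k j where "gidx n w r i = (k, j, 0)" "j < n"
  using assms by (simp add: gidx_def nat_less_iff)

lemma valid_gidx: "0 < n \<Longrightarrow> valid_idx n (gidx n w r i)"
  by (metis gidx_cases valid_idx_def fst_conv snd_conv)

lemma mono_mult_gidx:
  assumes n: "0 < n"
  shows "mono_mult n w \<gamma> (gidx n w r i) (gidx n w r' i') = bsingle (gidx n w (r + r') (i + i')) 1"
proof -
  define q where "q = i div int n"
  define q' where "q' = i' div int n"
  define j where "j = nat (i mod int n)"
  define j' where "j' = nat (i' mod int n)"
  have j: "j < n" "j' < n" using n by (simp_all add: j_def j'_def nat_less_iff)
  have i: "i = q * int n + int j" "i' = q' * int n + int j'"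
    using n by (simp_all add: q_def q'_def j_def j'_def)
  have g: "gidx n w r i = (r + int w * q, j, 0)" "gidx n w r' i' = (r' + int w * q', j', 0)"
    using gidx_eqI[OF j(1) i(1)] gidx_eqI[OF j(2) i(2)] .
  show ?thesis
  proof (cases "j + j' < n")
    case True
    have "gidx n w (r + r') (i + i') = (r + r' + int w * (q + q'), j + j', 0)"
      by (rule gidx_eqI) (use True i in \<open>simp_all add: algebra_simps\<close>)
    then show ?thesis using True n by (simp add: g mono_mult_def Let_def algebra_simps)
  next
    case False
    have "gidx n w (r + r') (i + i') = (r + r' + int w * (q + q' + 1), j + j' - n, 0)"
      by (rule gidx_eqI) (use False i j in \<open>simp_all add: algebra_simps of_nat_diff\<close>)
    then show ?thesis using False n by (simp add: g mono_mult_def Let_def algebra_simps)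
  qed
qed

lemma hmult_bsingle:
  assumes "a \<noteq> 0" "b \<noteq> 0"
  shows "hmult n w \<gamma> (bsingle p a) (bsingle q b) = (\<lambda>t. a * b * mono_mult n w \<gamma> p q t)"
  using assms unfolding hmult_def fsupp_bsingle[OF assms(1)] fsupp_bsingle[OF assms(2)]
  by (simp add: bsingle_def)

lemma hmult_hgl: "0 < n \<Longrightarrow> hmult n w \<gamma> (hgl n w r i) (hgl n w r' i') = hgl n w (r + r') (i + i')"
  by (simp add: hgl_def hmult_bsingle mono_mult_gidx)

lemma hone_eq_hgl: "hone = hgl n w 0 0"
  by (simp add: hone_def hgl_def gidx_0_0)

lemma hpow_hgl: "0 < n \<Longrightarrow> hpow n w \<gamma> (hgl n w r i) m = hgl n w (int m * r) (int m * i)"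
  by (induction m) (simp_all add: hone_eq_hgl[of n w] hmult_hgl algebra_simps)

lemma hS_grouplike: "0 < n \<Longrightarrow> j < n \<Longrightarrow> hS n w \<gamma> (k, j, 0) = hgl n w (-k) (- int j)"
  by (simp add: hS_def hone_eq_hgl[of n w] hmult_hgl hpow_hgl hginv_def)

definition tgl :: "nat \<Rightarrow> nat \<Rightarrow> int \<Rightarrow> int \<Rightarrow> idx \<times> idx \<Rightarrow> 'k::field" where
  "tgl n w r i = bsingle (gidx n w r i, gidx n w r i) 1"

lemma tmult_bsingle:
  assumes "a \<noteq> 0" "b \<noteq> 0"
  shows "tmult n w \<gamma> (bsingle (p1, p2) a) (bsingle (q1, q2) b) =
    (\<lambda>(s, t). a * b * mono_mult n w \<gamma> p1 q1 s * mono_mult n w \<gamma> p2 q2 t)"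
  using assms unfolding tmult_def fsupp_bsingle[OF assms(1)] fsupp_bsingle[OF assms(2)]
  by (simp add: bsingle_def)

lemma tmult_tgl: "0 < n \<Longrightarrow> tmult n w \<gamma> (tgl n w r i) (tgl n w r' i') = tgl n w (r + r') (i + i')"
  unfolding tgl_def by (subst tmult_bsingle) (auto simp: mono_mult_gidx bsingle_def)

lemma tone_eq_tgl: "tone = tgl n w 0 0"
  by (simp add: tone_def tgl_def gidx_0_0)

lemma tpow_tgl: "0 < n \<Longrightarrow> tpow n w \<gamma> (tgl n w r i) m = tgl n w (int m * r) (int m * i)"
  by (induction m) (simp_all add: tone_eq_tgl[of n w] tmult_tgl algebra_simps)

lemma ttensor_hgl: "ttensor (hgl n w r i) (hgl n w r i) = tgl n w r i"
  by (auto simp: ttensor_def hgl_def tgl_def bsingle_def)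

lemma hDelta_grouplike:
  assumes "0 < n" "j < n"
  shows "hDelta n w \<gamma> (k, j, 0) = bsingle ((k, j, 0), (k, j, 0)) 1"
proof -
  have "hDelta n w \<gamma> (k, j, 0) = tgl n w k (int j)"
    using assms by (simp add: hDelta_def hx_def hxinv_def hg_def ttensor_hgl tpow_tgl tmult_tgl
        tone_eq_tgl[of n w])
  then show ?thesis using assms by (simp add: tgl_def gidx_eq)
qed

lemma mono_mult_support:
  assumes "valid_idx n p" "valid_idx n q" "mono_mult n w \<gamma> p q s \<noteq> 0"
  shows "valid_idx n s" "ydeg p + ydeg q < n \<Longrightarrow> ydeg s = ydeg p + ydeg q"
proof -
  obtain k j l k' j' l' where "p = (k, j, l)" "q = (k', j', l')" by (cases p, cases q)
  then show "valid_idx n s" "ydeg p + ydeg q < n \<Longrightarrow> ydeg s = ydeg p + ydeg q"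
    using assms by (auto simp: mono_mult_def Let_def bsingle_def valid_idx_def split: if_splits)
qed

definition homogeneous_tensor :: "nat \<Rightarrow> nat \<Rightarrow> (idx \<times> idx \<Rightarrow> 'k::field) \<Rightarrow> bool" where
  "homogeneous_tensor n d A \<longleftrightarrow>
     (\<forall>s t. A (s, t) \<noteq> 0 \<longrightarrow> valid_idx n s \<and> valid_idx n t \<and> ydeg s + ydeg t = d)"

lemma sum_case_prod_nonzeroE:
  assumes "(\<Sum>(a, b)\<in>S. f a b) \<noteq> (0::'a::comm_monoid_add)"
  obtains a b where "(a, b) \<in> S" "f a b \<noteq> 0"
  using sum.not_neutral_contains_not_neutral[OF assms] by auto

lemma homogeneous_tensor_tmult:
  assumes A: "homogeneous_tensor n d A" and B: "homogeneous_tensor n d' B" and d: "d + d' < n"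
  shows "homogeneous_tensor n (d + d') (tmult n w \<gamma> A B)"
  unfolding homogeneous_tensor_def
proof (intro allI impI)
  fix s t assume "tmult n w \<gamma> A B (s, t) \<noteq> 0"
  then obtain p1 p2 where "(p1, p2) \<in> fsupp A" and inner:
    "(\<Sum>(q1, q2)\<in>fsupp B.
        A (p1, p2) * B (q1, q2) * mono_mult n w \<gamma> p1 q1 s * mono_mult n w \<gamma> p2 q2 t) \<noteq> 0"
    unfolding tmult_def by (auto elim: sum_case_prod_nonzeroE)
  obtain q1 q2 where "(q1, q2) \<in> fsupp B"
    "A (p1, p2) * B (q1, q2) * mono_mult n w \<gamma> p1 q1 s * mono_mult n w \<gamma> p2 q2 t \<noteq> 0"
    by (rule sum_case_prod_nonzeroE[OF inner])
  then have nz: "A (p1, p2) \<noteq> 0" "B (q1, q2) \<noteq> 0"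
    "mono_mult n w \<gamma> p1 q1 s \<noteq> 0" "mono_mult n w \<gamma> p2 q2 t \<noteq> 0"
    by auto
  from A nz(1) have a: "valid_idx n p1" "valid_idx n p2" "ydeg p1 + ydeg p2 = d"
    unfolding homogeneous_tensor_def by blast+
  from B nz(2) have b: "valid_idx n q1" "valid_idx n q2" "ydeg q1 + ydeg q2 = d'"
    unfolding homogeneous_tensor_def by blast+
  show "valid_idx n s \<and> valid_idx n t \<and> ydeg s + ydeg t = d + d'"
    using mono_mult_support[OF a(1) b(1) nz(3)] mono_mult_support[OF a(2) b(2) nz(4)] a b d
    by auto
qed

lemma ydeg_gidx: "ydeg (gidx n w r i) = 0"
  by (simp add: gidx_def)

lemma homogeneous_tensor_tgl: "0 < n \<Longrightarrow> homogeneous_tensor n 0 (tgl n w r i)"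
  unfolding homogeneous_tensor_def tgl_def bsingle_def
  by (metis (mono_tags) prod.inject valid_gidx ydeg_gidx add_0)

lemma homogeneous_tensor_tpow:
  assumes "homogeneous_tensor n 1 A" "m < n"
  shows "homogeneous_tensor n m (tpow n w \<gamma> A m)"
  using assms(2)
proof (induction m)
  case 0
  then show ?case using homogeneous_tensor_tgl by (simp add: tone_eq_tgl[of n w])
next
  case (Suc m)
  then show ?case using homogeneous_tensor_tmult[OF assms(1) Suc.IH] by simp
qed

lemma ttensor_bsingle: "ttensor (bsingle a 1) (bsingle b 1) = (bsingle (a, b) 1 :: _ \<Rightarrow> 'k::field)"
  by (auto simp: ttensor_def bsingle_def)

lemma homogeneous_tensor_Delta_y:
  assumes "1 < n"
  shows "homogeneous_tensor n 1 (\<lambda>st. ttensor (hy n w) (hg n w) st + ttensor hone (hy n w) st)"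
proof -
  have yg: "hy n w = bsingle (0, 0, 1) 1" "hg n w = bsingle (0, 1, 0) 1"
    using assms gidx_eq[of 1 n w 0] by (simp_all add: hy_def hg_def hgl_def)
  have Delta_y: "(\<lambda>st. ttensor (hy n w) (hg n w) st + ttensor hone (hy n w) st) =
      (\<lambda>st. bsingle ((0, 0, 1), (0, 1, 0)) 1 st + bsingle ((0, 0, 0), (0, 0, 1)) 1 st)"
    by (simp only: yg hone_def ttensor_bsingle)
  show ?thesis
    unfolding Delta_y using assms by (simp add: homogeneous_tensor_def bsingle_def valid_idx_def)
qed

lemma homogeneous_tensor_hDelta:
  assumes n: "0 < n" and p: "valid_idx n p"
  shows "homogeneous_tensor n (ydeg p) (hDelta n w \<gamma> p)"
proof -
  obtain k j l where kjl: "p = (k, j, l)" by (cases p)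
  have jl: "j < n" "l < n" using p by (auto simp: kjl valid_idx_def)
  let ?X = "if 0 \<le> k then tpow n w \<gamma> (ttensor (hx n w) (hx n w)) (nat k)
            else tpow n w \<gamma> (ttensor (hxinv n w) (hxinv n w)) (nat (- k))"
  let ?G = "tpow n w \<gamma> (ttensor (hg n w) (hg n w)) j"
  let ?Y = "tpow n w \<gamma> (\<lambda>st. ttensor (hy n w) (hg n w) st + ttensor hone (hy n w) st) l"
  have X: "homogeneous_tensor n 0 ?X" and G: "homogeneous_tensor n 0 ?G"
    using homogeneous_tensor_tgl[OF n]
    by (simp_all add: hx_def hxinv_def hg_def ttensor_hgl tpow_tgl n)
  have Y: "homogeneous_tensor n l ?Y"
  proof (cases "l = 0")
    case True
    then show ?thesis using homogeneous_tensor_tgl[OF n] by (simp add: tone_eq_tgl[of n w])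
  next
    case False
    then have "1 < n" using jl(2) by linarith
    then show ?thesis using homogeneous_tensor_tpow[OF homogeneous_tensor_Delta_y] jl(2) by blast
  qed
  have "homogeneous_tensor n (0 + (0 + l)) (tmult n w \<gamma> ?X (tmult n w \<gamma> ?G ?Y))"
    using jl by (intro homogeneous_tensor_tmult X homogeneous_tensor_tmult G Y) simp_all
  then show ?thesis by (simp add: kjl hDelta_def)
qed

lemma hDelta_support_valid:
  assumes "0 < n" "valid_idx n p" "(a, b) \<in> fsupp (hDelta n w \<gamma> p)"
  shows "valid_idx n a" "valid_idx n b"
  using homogeneous_tensor_hDelta[OF assms(1,2), of w \<gamma>] assms(3)
  unfolding homogeneous_tensor_def fsupp_def by blast+

section \<open>Modules over H\<close>

definition H_orbit :: "nat \<Rightarrow> (idx \<Rightarrow> 'v \<Rightarrow> 'v) \<Rightarrow> 'v \<Rightarrow> 'v set" where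
  "H_orbit n act z = {act p z | p. valid_idx n p}"

locale H_module =
  fixes n w :: nat and \<gamma> :: "'k::field" and s :: "'k \<Rightarrow> 'v::ab_group_add \<Rightarrow> 'v"
    and act :: "idx \<Rightarrow> 'v \<Rightarrow> 'v"
  assumes n_pos: "0 < n" and \<gamma>_nonzero: "\<gamma> \<noteq> 0" and vector_space: "vector_space s"
    and linear_act: "\<And>p. valid_idx n p \<Longrightarrow> Vector_Spaces.linear s s (act p)"
    and act_unit: "\<And>v. act (0, 0, 0) v = v"
    and act_act: "\<And>p q v. valid_idx n p \<Longrightarrow> valid_idx n q \<Longrightarrow>
      act p (act q v) = hact s act (mono_mult n w \<gamma> p q) v"
begin

sublocale vector_space s by (rule vector_space)

lemma hact_bsingle:
  assumes "c \<noteq> 0"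
  shows "hact s act (bsingle p c) v = s c (act p v)"
  unfolding hact_def fsupp_bsingle[OF assms] by (simp add: bsingle_def)

lemma act_0: "valid_idx n p \<Longrightarrow> act p 0 = 0"
  using linear_map_0[OF linear_act] .

lemma act_scale: "valid_idx n p \<Longrightarrow> act p (s c v) = s c (act p v)"
  using linear_map_scale[OF linear_act] .

lemma act_gidx_act_gidx:
  "act (gidx n w r i) (act (gidx n w r' i') v) = act (gidx n w (r + r') (i + i')) v"
  using act_act[OF valid_gidx[OF n_pos] valid_gidx[OF n_pos]]
  by (simp add: mono_mult_gidx[OF n_pos] hact_bsingle)

lemma act_gidx_0_0: "act (gidx n w 0 0) v = v"
  by (simp add: gidx_0_0 act_unit)

lemma grouplike_eigenvalue_nonzero:
  assumes "act (gidx n w r i) z = s c z" "z \<noteq> 0"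
  shows "c \<noteq> 0"
proof
  assume "c = 0"
  then have "act (gidx n w (-r) (-i)) (act (gidx n w r i) z) = 0"
    using assms(1) act_0[OF valid_gidx[OF n_pos]] by simp
  then show False using assms(2) by (simp add: act_gidx_act_gidx act_gidx_0_0)
qed

lemma self_in_H_orbit: "z \<in> H_orbit n act z"
proof -
  have "valid_idx n (0, 0, 0)" using n_pos by (simp add: valid_idx_def)
  then show ?thesis unfolding H_orbit_def using act_unit[of z] by force
qed

lemma act_H_orbit_span:
  assumes q: "valid_idx n q" and x: "x \<in> span (H_orbit n act z)"
  shows "act q x \<in> span (H_orbit n act z)"
proof -
  have "act q y \<in> span (H_orbit n act z)" if y: "y \<in> H_orbit n act z" for y
  proof -
    obtain p where p: "valid_idx n p" "y = act p z" using y unfolding H_orbit_def by blast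
    have "act q y = (\<Sum>t\<in>fsupp (mono_mult n w \<gamma> q p). s (mono_mult n w \<gamma> q p t) (act t z))"
      using act_act[OF q p(1)] p(2) by (simp add: hact_def)
    also have "\<dots> \<in> span (H_orbit n act z)"
    proof (intro span_sum span_scale span_base)
      fix t assume "t \<in> fsupp (mono_mult n w \<gamma> q p)"
      then show "act t z \<in> H_orbit n act z"
        using mono_mult_support(1)[OF q p(1)] unfolding H_orbit_def fsupp_def by blast
    qed
    finally show ?thesis .
  qed
  then show ?thesis using linear_span_stable[OF linear_act[OF q]] x by blast
qed

context
  fixes z \<alpha> \<beta>
  assumes x_eigen: "act (gidx n w 1 0) z = s \<alpha> z" and g_eigen: "act (gidx n w 0 1) z = s \<beta> z"
    and \<alpha>_nonzero: "\<alpha> \<noteq> 0"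
begin

lemma act_x_power_eigen: "act (gidx n w r 0) z = s (\<alpha> powi r) z"
proof (induction r rule: int_induct[where k = 0])
  case base
  then show ?case by (simp add: act_gidx_0_0)
next
  case (step1 r)
  have "act (gidx n w (r + 1) 0) z = act (gidx n w 1 0) (act (gidx n w r 0) z)"
    by (simp add: act_gidx_act_gidx add.commute)
  also have "\<dots> = s (\<alpha> powi (r + 1)) z"
    using step1 x_eigen \<alpha>_nonzero by (simp add: act_scale[OF valid_gidx[OF n_pos]] power_int_add_1)
  finally show ?case .
next
  case (step2 r)
  have "s \<alpha> (act (gidx n w (-1) 0) z) = z"
    using act_gidx_act_gidx[of "-1" 0 1 0 z] x_eigen
    by (simp add: act_scale[OF valid_gidx[OF n_pos]] act_gidx_0_0)
  then have "s (inverse \<alpha>) (s \<alpha> (act (gidx n w (-1) 0) z)) = s (inverse \<alpha>) z" by simp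
  then have x_inv: "act (gidx n w (-1) 0) z = s (inverse \<alpha>) z" using \<alpha>_nonzero by simp
  have "act (gidx n w (r - 1) 0) z = act (gidx n w (-1) 0) (act (gidx n w r 0) z)"
    by (simp add: act_gidx_act_gidx)
  also have "\<dots> = s (\<alpha> powi (r - 1)) z"
    using step2 x_inv \<alpha>_nonzero
    by (simp add: act_scale[OF valid_gidx[OF n_pos]] power_int_diff field_simps)
  finally show ?case .
qed

lemma act_grouplike_eigen:
  assumes "j < n"
  shows "act (k, j, 0) z = s (\<alpha> powi k * \<beta> ^ j) z"
proof -
  have "act (gidx n w k (int j)) z = s (\<alpha> powi k * \<beta> ^ j) z" for j
  proof (induction j)
    case 0
    then show ?case using act_x_power_eigen by simp
  next
    case (Suc j)
    have "act (gidx n w k (int (Suc j))) z = act (gidx n w 0 1) (act (gidx n w k (int j)) z)"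
      by (simp add: act_gidx_act_gidx add.commute)
    also have "\<dots> = s (\<alpha> powi k * \<beta> ^ Suc j) z"
      using Suc g_eigen by (simp add: act_scale[OF valid_gidx[OF n_pos]] algebra_simps)
    finally show ?case .
  qed
  then show ?thesis using gidx_eq[OF assms] by metis
qed

lemma act_eq_scale_act_y_power:
  assumes "j < n" "l < n"
  shows "act (k, j, l) z = s (\<alpha> powi k * \<beta> ^ j / \<gamma> ^ (l * j)) (act (0, 0, l) z)"
proof -
  have valid: "valid_idx n (0, 0, l)" "valid_idx n (k, j, 0)"
    using assms n_pos by (auto simp: valid_idx_def)
  have "mono_mult n w \<gamma> (0, 0, l) (k, j, 0) = bsingle (k, j, l) (\<gamma> ^ (l * j))"
    using assms by (simp add: mono_mult_def Let_def)
  then have "s (\<gamma> ^ (l * j)) (act (k, j, l) z) = act (0, 0, l) (act (k, j, 0) z)"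
    using act_act[OF valid] by (simp add: hact_bsingle \<gamma>_nonzero)
  also have "\<dots> = s (\<alpha> powi k * \<beta> ^ j) (act (0, 0, l) z)"
    using act_grouplike_eigen[OF assms(1)] act_scale[OF valid(1)] by simp
  finally have "s (inverse (\<gamma> ^ (l * j))) (s (\<gamma> ^ (l * j)) (act (k, j, l) z)) =
      s (inverse (\<gamma> ^ (l * j))) (s (\<alpha> powi k * \<beta> ^ j) (act (0, 0, l) z))"
    by simp
  then show ?thesis using \<gamma>_nonzero by (simp add: field_simps)
qed

lemma g_act_y_power:
  assumes "l < n"
  shows "act (gidx n w 0 1) (act (0, 0, l) z) = s (\<beta> / \<gamma> ^ l) (act (0, 0, l) z)"
proof (cases "l = 0")
  case True
  then show ?thesis using g_eigen by (simp add: act_unit)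
next
  case False
  then have n: "1 < n" using assms by linarith
  then have g: "gidx n w 0 1 = (0, 1, 0)" using gidx_eq[of 1 n w 0] by simp
  have "mono_mult n w \<gamma> (0, 1, 0) (0, 0, l) = bsingle (0, 1, l) 1"
    using assms n by (simp add: mono_mult_def Let_def)
  then have "act (0, 1, 0) (act (0, 0, l) z) = act (0, 1, l) z"
    using act_act[of "(0, 1, 0)" "(0, 0, l)"] assms n by (simp add: valid_idx_def hact_bsingle)
  then show ?thesis
    using act_eq_scale_act_y_power[OF n assms] by (simp add: g)
qed

lemma H_orbit_subset_span_y_powers: "H_orbit n act z \<subseteq> span ((\<lambda>l. act (0, 0, l) z) ` {..<n})"
proof
  fix y assume "y \<in> H_orbit n act z"
  then obtain k j l where y: "y = act (k, j, l) z" and jl: "j < n" "l < n"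
    unfolding H_orbit_def valid_idx_def by force
  have "act (0, 0, l) z \<in> (\<lambda>l. act (0, 0, l) z) ` {..<n}" using jl(2) by blast
  then show "y \<in> span ((\<lambda>l. act (0, 0, l) z) ` {..<n})"
    unfolding y act_eq_scale_act_y_power[OF jl] by (intro span_scale span_base)
qed

lemma g_eigenvector_in_H_orbit_span:
  assumes prim: "primitive_root n \<gamma>" and \<beta>: "\<beta> \<noteq> 0"
    and y: "y \<in> span (H_orbit n act z)" and gy: "act (gidx n w 0 1) y = s \<beta> y"
  shows "\<exists>c. y = s c z"
proof -
  define G where "G = act (gidx n w 0 1)"
  \<comment> \<open>\<open>p(g)\<close> annihilates \<open>y\<^sup>l z\<close> for \<open>0 < l < n\<close> and is invertible on \<open>z\<close>\<close>
  define p where "p = (\<Prod>i\<in>{1..<n}. [:- (\<beta> / \<gamma> ^ i), 1:])"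
  define Q where "Q = poly_apply s G p"
  have G: "Vector_Spaces.linear s s G" unfolding G_def by (rule linear_act[OF valid_gidx[OF n_pos]])
  have poly_p: "poly p c = (\<Prod>i\<in>{1..<n}. c - \<beta> / \<gamma> ^ i)" for c
    by (simp add: p_def poly_prod)
  have "poly p \<beta> \<noteq> 0"
  proof -
    have "\<beta> - \<beta> / \<gamma> ^ i \<noteq> 0" if "i \<in> {1..<n}" for i
    proof
      assume "\<beta> - \<beta> / \<gamma> ^ i = 0"
      then have "\<gamma> ^ i = 1" using \<beta> \<gamma>_nonzero by (simp add: field_simps)
      then show False using prim that unfolding primitive_root_def by auto
    qed
    then show ?thesis by (simp add: poly_p)
  qed
  have "Q (act (0, 0, l) z) \<in> span {z}" if "l < n" for l
  proof -
    have "Q (act (0, 0, l) z) = s (poly p (\<beta> / \<gamma> ^ l)) (act (0, 0, l) z)"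
      unfolding Q_def
      by (rule poly_apply_eigenvector[OF G]) (use g_act_y_power[OF that] in \<open>simp add: G_def\<close>)
    moreover have "poly p (\<beta> / \<gamma> ^ l) = 0" if "0 < l"
      unfolding poly_p using \<open>l < n\<close> that by (intro prod_zero bexI[of _ l]) auto
    ultimately show ?thesis
      by (cases "l = 0") (auto simp: act_unit intro: span_zero span_scale span_base)
  qed
  then have "Q ` ((\<lambda>l. act (0, 0, l) z) ` {..<n}) \<subseteq> span {z}" by auto
  then have "span (Q ` ((\<lambda>l. act (0, 0, l) z) ` {..<n})) \<subseteq> span {z}"
    by (intro span_minimal subspace_span)
  then have "Q ` span ((\<lambda>l. act (0, 0, l) z) ` {..<n}) \<subseteq> span {z}"
    unfolding Q_def module_hom.span_image[OF module_hom_linearI[OF linear_poly_apply[OF G]]] .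
  moreover have "y \<in> span ((\<lambda>l. act (0, 0, l) z) ` {..<n})"
    using y span_mono[OF H_orbit_subset_span_y_powers] by (auto simp: span_span)
  ultimately obtain c where "Q y = s c z" by (auto simp: span_singleton)
  moreover have "Q y = s (poly p \<beta>) y"
    unfolding Q_def by (rule poly_apply_eigenvector[OF G]) (simp add: G_def gy)
  ultimately have "s (inverse (poly p \<beta>)) (s (poly p \<beta>) y) = s (inverse (poly p \<beta>)) (s c z)"
    by simp
  then show ?thesis using \<open>poly p \<beta> \<noteq> 0\<close> by auto
qed

end

end

section \<open>Yetter-Drinfeld modules and direct sums\<close>

(* The coefficient of the basis element t in p_(1) q S(p_(3)), in the summand of
   (Delta (x) id) Delta p indexed by (a, b) in Delta p and (a1, a2) in Delta a,
   i.e. p_(1) = a1, p_(2) = a2, p_(3) = b. *)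
abbreviation YD_coeff ::
    "nat \<Rightarrow> nat \<Rightarrow> 'k::field \<Rightarrow> idx \<Rightarrow> idx \<Rightarrow> idx \<Rightarrow> idx \<Rightarrow> idx \<Rightarrow> idx \<Rightarrow> idx \<Rightarrow> 'k" where
  "YD_coeff n w \<gamma> p a b a1 a2 q t \<equiv>
     hDelta n w \<gamma> p (a, b) * hDelta n w \<gamma> a (a1, a2) *
     hmult n w \<gamma> (hmult n w \<gamma> (hbasis a1) (hbasis q)) (hS n w \<gamma> b) t"

locale YD_module = H_module n w \<gamma> s act
  for n w :: nat and \<gamma> :: "'k::field" and s :: "'k \<Rightarrow> 'v::ab_group_add \<Rightarrow> 'v" and act +
  fixes co :: "'v \<Rightarrow> idx \<Rightarrow> 'v"
  assumes linear_co: "\<And>t. Vector_Spaces.linear s s (\<lambda>v. co v t)"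
    and finite_co: "\<And>v. finite (fsupp (co v))"
    and valid_co: "\<And>v t. t \<in> fsupp (co v) \<Longrightarrow> valid_idx n t"
    and counit: "\<And>v. (\<Sum>t\<in>fsupp (co v). s (heps t) (co v t)) = v"
    and coassoc: "\<And>v a b. (\<Sum>p\<in>fsupp (co v). s (hDelta n w \<gamma> p (a, b)) (co v p)) = co (co v a) b"
    and co_act: "\<And>p v t. valid_idx n p \<Longrightarrow> co (act p v) t =
      (\<Sum>(a, b)\<in>fsupp (hDelta n w \<gamma> p). \<Sum>(a1, a2)\<in>fsupp (hDelta n w \<gamma> a). \<Sum>q\<in>fsupp (co v).
         s (YD_coeff n w \<gamma> p a b a1 a2 q t) (act a2 (co v q)))"

lemma YD_moduleI:
  assumes "0 < n" "\<gamma> \<noteq> 0" "is_YD n w \<gamma> s act co"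
  shows "YD_module n w \<gamma> s act co"
  using assms unfolding is_YD_def YD_module_def YD_module_axioms_def H_module_def by blast

lemma sum_fsupp_superset:
  assumes "finite F" "fsupp f \<subseteq> F" "\<And>t. g t 0 = 0"
  shows "(\<Sum>t\<in>F. g t (f t)) = (\<Sum>t\<in>fsupp f. g t (f t))"
  by (rule sum.mono_neutral_right) (use assms in \<open>auto simp: fsupp_def\<close>)

context YD_module
begin

lemma co_0: "co 0 t = 0"
  using linear_map_0[OF linear_co] .

(* Direct sums need the coaction axioms with sums over a common finite superset of the supports. *)
lemma counit_superset:
  "finite F \<Longrightarrow> fsupp (co v) \<subseteq> F \<Longrightarrow> (\<Sum>t\<in>F. s (heps t) (co v t)) = v"
  using counit sum_fsupp_superset[where g = "\<lambda>t. s (heps t)"] by simp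

lemma coassoc_superset:
  "finite F \<Longrightarrow> fsupp (co v) \<subseteq> F \<Longrightarrow> (\<Sum>p\<in>F. s (hDelta n w \<gamma> p (a, b)) (co v p)) = co (co v a) b"
  using coassoc sum_fsupp_superset[where g = "\<lambda>p. s (hDelta n w \<gamma> p (a, b))"] by simp

lemma co_act_superset:
  assumes p: "valid_idx n p" and F: "finite F" "fsupp (co v) \<subseteq> F"
  shows "co (act p v) t =
      (\<Sum>(a, b)\<in>fsupp (hDelta n w \<gamma> p). \<Sum>(a1, a2)\<in>fsupp (hDelta n w \<gamma> a). \<Sum>q\<in>F.
         s (YD_coeff n w \<gamma> p a b a1 a2 q t) (act a2 (co v q)))"
  unfolding co_act[OF p]
proof (rule sum.cong[OF refl], clarify, rule sum.cong[OF refl], clarify)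
  fix a b a1 a2
  assume "(a, b) \<in> fsupp (hDelta n w \<gamma> p)" "(a1, a2) \<in> fsupp (hDelta n w \<gamma> a)"
  then have "valid_idx n a2" using hDelta_support_valid n_pos p by meson
  then show "(\<Sum>q\<in>fsupp (co v). s (YD_coeff n w \<gamma> p a b a1 a2 q t) (act a2 (co v q))) =
      (\<Sum>q\<in>F. s (YD_coeff n w \<gamma> p a b a1 a2 q t) (act a2 (co v q)))"
    using sum_fsupp_superset[OF F, of "\<lambda>q x. s (YD_coeff n w \<gamma> p a b a1 a2 q t) (act a2 x)"]
    by (simp add: act_0)
qed


lemma co_act_in_H_orbit_span:
  assumes z: "co z = bsingle h z" and p: "valid_idx n p"
  shows "co (act p z) t \<in> span (H_orbit n act z)"
proof (cases "z = 0")
  case True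
  then show ?thesis using act_0[OF p] co_0 span_zero by simp
next
  case False
  have "co (act p z) t =
      (\<Sum>(a, b)\<in>fsupp (hDelta n w \<gamma> p). \<Sum>(a1, a2)\<in>fsupp (hDelta n w \<gamma> a).
         s (YD_coeff n w \<gamma> p a b a1 a2 h t) (act a2 z))"
    unfolding co_act[OF p] z fsupp_bsingle[OF False] by (simp add: bsingle_def)
  also have "\<dots> \<in> span (H_orbit n act z)"
  proof (intro span_sum, clarify, intro span_sum, clarify, intro span_scale span_base)
    fix a b a1 a2
    assume "(a, b) \<in> fsupp (hDelta n w \<gamma> p)" "(a1, a2) \<in> fsupp (hDelta n w \<gamma> a)"
    then have "valid_idx n a2" using hDelta_support_valid n_pos p by meson
    then show "act a2 z \<in> H_orbit n act z" unfolding H_orbit_def by blast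
  qed
  finally show ?thesis .
qed

lemma YD_submodule_H_orbit_span:
  assumes z: "co z = bsingle h z"
  shows "YD_submodule n s act co (span (H_orbit n act z))"
  unfolding YD_submodule_def
proof (intro conjI allI impI subspace_span)
  show "act p x \<in> span (H_orbit n act z)" if "valid_idx n p" "x \<in> span (H_orbit n act z)" for p x
    using act_H_orbit_span that .
  have "(\<lambda>x. co x t) ` H_orbit n act z \<subseteq> span (H_orbit n act z)" for t
    using co_act_in_H_orbit_span[OF z] unfolding H_orbit_def by blast
  then show "co x t \<in> span (H_orbit n act z)" if "x \<in> span (H_orbit n act z)" for x t
    using linear_span_stable[OF linear_co] that by blast
qed

end

definition prod_scale :: "('k \<Rightarrow> 'v \<Rightarrow> 'v) \<Rightarrow> ('k \<Rightarrow> 'u \<Rightarrow> 'u) \<Rightarrow> 'k \<Rightarrow> 'v \<times> 'u \<Rightarrow> 'v \<times> 'u" where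
  "prod_scale sV sW c x = (sV c (fst x), sW c (snd x))"

definition prod_act :: "(idx \<Rightarrow> 'v \<Rightarrow> 'v) \<Rightarrow> (idx \<Rightarrow> 'u \<Rightarrow> 'u) \<Rightarrow> idx \<Rightarrow> 'v \<times> 'u \<Rightarrow> 'v \<times> 'u" where
  "prod_act actV actW p x = (actV p (fst x), actW p (snd x))"

definition prod_coact :: "('v \<Rightarrow> idx \<Rightarrow> 'v) \<Rightarrow> ('u \<Rightarrow> idx \<Rightarrow> 'u) \<Rightarrow> 'v \<times> 'u \<Rightarrow> idx \<Rightarrow> 'v \<times> 'u" where
  "prod_coact coV coW x t = (coV (fst x) t, coW (snd x) t)"

lemma vector_space_prod_scale:
  "vector_space sV \<Longrightarrow> vector_space sW \<Longrightarrow> vector_space (prod_scale sV sW)"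
  unfolding vector_space_def prod_scale_def by (auto simp: prod_eq_iff)

lemma linear_prod_map:
  "Vector_Spaces.linear sV sV f \<Longrightarrow> Vector_Spaces.linear sW sW g \<Longrightarrow>
    Vector_Spaces.linear (prod_scale sV sW) (prod_scale sV sW) (\<lambda>x. (f (fst x), g (snd x)))"
  by (auto simp: Vector_Spaces.linear_iff prod_scale_def vector_space_prod_scale)

lemma sum_prod_scale:
  "(\<Sum>t\<in>F. prod_scale sV sW (c t) (x t)) =
    ((\<Sum>t\<in>F. sV (c t) (fst (x t))), (\<Sum>t\<in>F. sW (c t) (snd (x t))))"
  by (simp add: prod_eq_iff fst_sum snd_sum prod_scale_def)

lemma hact_prod:
  "hact (prod_scale sV sW) (prod_act actV actW) a x =
    (hact sV actV a (fst x), hact sW actW a (snd x))"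
  by (simp add: hact_def sum_prod_scale prod_act_def)

lemma prod_act_eq: "prod_act actV actW p = (\<lambda>x. (actV p (fst x), actW p (snd x)))"
  by (simp add: fun_eq_iff prod_act_def)

lemma H_module_prod:
  assumes "H_module n w \<gamma> sV actV" "H_module n w \<gamma> sW actW"
  shows "H_module n w \<gamma> (prod_scale sV sW) (prod_act actV actW)"
  using assms unfolding H_module_def
  by (auto simp: vector_space_prod_scale hact_prod prod_act_def prod_act_eq intro: linear_prod_map)

lemma fsupp_prod_coact: "fsupp (prod_coact coV coW x) = fsupp (coV (fst x)) \<union> fsupp (coW (snd x))"
  by (auto simp: fsupp_def prod_coact_def zero_prod_def)

lemma YD_module_prod:
  assumes V: "YD_module n w \<gamma> sV actV coV" and W: "YD_module n w \<gamma> sW actW coW"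
  shows "YD_module n w \<gamma> (prod_scale sV sW) (prod_act actV actW) (prod_coact coV coW)"
proof -
  interpret V: YD_module n w \<gamma> sV actV coV by (fact V)
  interpret W: YD_module n w \<gamma> sW actW coW by (fact W)
  have H: "H_module n w \<gamma> (prod_scale sV sW) (prod_act actV actW)"
    by (rule H_module_prod) unfold_locales
  define F where "F x = fsupp (coV (fst x)) \<union> fsupp (coW (snd x))" for x
  have F: "finite (F x)" "fsupp (coV (fst x)) \<subseteq> F x" "fsupp (coW (snd x)) \<subseteq> F x" for x
    by (auto simp: F_def V.finite_co W.finite_co)
  show ?thesis
    unfolding YD_module_def YD_module_axioms_def fsupp_prod_coact F_def[symmetric]
  proof (intro conjI H allI impI)
    show "Vector_Spaces.linear (prod_scale sV sW) (prod_scale sV sW) (\<lambda>x. prod_coact coV coW x t)"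
      for t
      unfolding prod_coact_def by (rule linear_prod_map[OF V.linear_co W.linear_co])
    show "finite (F x)" for x by (fact F(1))
    show "valid_idx n t" if "t \<in> F x" for x t
      using that V.valid_co[of t "fst x"] W.valid_co[of t "snd x"] unfolding F_def by blast
    show "(\<Sum>t\<in>F x. prod_scale sV sW (heps t) (prod_coact coV coW x t)) = x" for x
      by (simp add: sum_prod_scale prod_coact_def V.counit_superset W.counit_superset F)
    show "(\<Sum>p\<in>F x. prod_scale sV sW (hDelta n w \<gamma> p (a, b)) (prod_coact coV coW x p)) =
        prod_coact coV coW (prod_coact coV coW x a) b" for x a b
      by (simp add: sum_prod_scale prod_coact_def V.coassoc_superset W.coassoc_superset F)
    show "prod_coact coV coW (prod_act actV actW p x) t =
      (\<Sum>(a, b)\<in>fsupp (hDelta n w \<gamma> p). \<Sum>(a1, a2)\<in>fsupp (hDelta n w \<gamma> a). \<Sum>q\<in>F x.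
         prod_scale sV sW (YD_coeff n w \<gamma> p a b a1 a2 q t)
           (prod_act actV actW a2 (prod_coact coV coW x q)))" if p: "valid_idx n p" for p x t
      by (simp add: prod_coact_def prod_act_def V.co_act_superset[OF p F(1,2)]
          W.co_act_superset[OF p F(1,3)] sum_prod_scale prod_eq_iff fst_sum snd_sum split_beta)
  qed
qed

section \<open>Standard elements\<close>

context H_module
begin

lemma hact_hgl: "hact s act (hgl n w r i) v = act (gidx n w r i) v"
  by (simp add: hgl_def hact_bsingle)

lemma standard_elem_iff:
  "standard_elem n w s act co \<alpha> \<beta> r i v \<longleftrightarrow>
     v \<noteq> 0 \<and> \<alpha> \<noteq> 0 \<and> \<beta> \<noteq> 0 \<and> act (gidx n w 1 0) v = s \<alpha> v \<and> act (gidx n w 0 1) v = s \<beta> v \<and>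
     co v = bsingle (gidx n w r i) v"
  by (simp add: standard_elem_def hx_def hg_def hact_hgl)

end

context YD_module
begin

lemma co_act_grouplike:
  assumes v: "co v = bsingle (gidx n w r i) v"
  shows "co (act (gidx n w r' i') v) = bsingle (gidx n w r i) (act (gidx n w r' i') v)"
proof (cases "v = 0")
  case True
  then show ?thesis using act_0[OF valid_gidx[OF n_pos]] co_0 by (simp add: bsingle_def fun_eq_iff)
next
  case False
  define h where "h = gidx n w r i"
  obtain k j where q: "gidx n w r' i' = (k, j, 0)" "j < n" using gidx_cases[OF n_pos] .
  have "hmult n w \<gamma> (hmult n w \<gamma> (hbasis (k, j, 0)) (hbasis h)) (hS n w \<gamma> (k, j, 0)) = hbasis h"
  proof -
    have b: "hbasis (k, j, 0) = hgl n w k (int j)" "hbasis h = hgl n w r i"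
      "hS n w \<gamma> (k, j, 0) = hgl n w (- k) (- int j)"
      using gidx_eq[OF q(2)] hS_grouplike[OF n_pos q(2)] by (simp_all add: hbasis_def hgl_def h_def)
    show ?thesis unfolding b hmult_hgl[OF n_pos] by simp
  qed
  moreover have "co (act (k, j, 0) v) t =
      s (hmult n w \<gamma> (hmult n w \<gamma> (hbasis (k, j, 0)) (hbasis h)) (hS n w \<gamma> (k, j, 0)) t)
        (act (k, j, 0) v)" for t
  proof -
    have "valid_idx n (k, j, 0)" using q(2) n_pos by (simp add: valid_idx_def)
    moreover have "fsupp (co v) = {h}" unfolding v h_def by (rule fsupp_bsingle[OF False])
    moreover have "co v h = v" by (simp add: v h_def bsingle_def)
    moreover have "hDelta n w \<gamma> (k, j, 0) = bsingle ((k, j, 0), (k, j, 0)) 1"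
      by (rule hDelta_grouplike[OF n_pos q(2)])
    ultimately show ?thesis by (simp add: co_act fsupp_bsingle) (simp add: bsingle_def)
  qed
  ultimately show ?thesis by (simp add: q(1) h_def fun_eq_iff hbasis_def bsingle_def)
qed

lemma exists_coaction_in_y_degree_zero:
  fixes v :: 'v
  assumes "v \<noteq> 0"
  shows "\<exists>u. u \<noteq> 0 \<and> (\<forall>t\<in>fsupp (co u). ydeg t = 0)"
proof -
  have ne: "fsupp (co v) \<noteq> {}" using counit[of v] assms by auto
  define L where "L = Max (ydeg ` fsupp (co v))"
  have "L \<in> ydeg ` fsupp (co v)" unfolding L_def by (rule Max_in) (simp_all add: finite_co ne)
  then obtain s0 where s0: "s0 \<in> fsupp (co v)" "ydeg s0 = L" by blast
  have "ydeg t = 0" if t: "t \<in> fsupp (co (co v s0))" for t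
  proof -
    have "(\<Sum>p\<in>fsupp (co v). s (hDelta n w \<gamma> p (s0, t)) (co v p)) \<noteq> 0"
      using t coassoc[where v = v and a = s0 and b = t] by (simp add: fsupp_def)
    then obtain p where p: "p \<in> fsupp (co v)" "s (hDelta n w \<gamma> p (s0, t)) (co v p) \<noteq> 0"
      by (rule sum.not_neutral_contains_not_neutral)
    then have "hDelta n w \<gamma> p (s0, t) \<noteq> 0" by auto
    moreover have "homogeneous_tensor n (ydeg p) (hDelta n w \<gamma> p)"
      by (rule homogeneous_tensor_hDelta[OF n_pos valid_co[OF p(1)]])
    ultimately have "ydeg s0 + ydeg t = ydeg p" unfolding homogeneous_tensor_def by blast
    moreover have "ydeg p \<le> L" unfolding L_def by (rule Max_ge) (use p(1) finite_co in auto)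
    ultimately show ?thesis using s0(2) by simp
  qed
  moreover have "co v s0 \<noteq> 0" using s0(1) by (simp add: fsupp_def)
  ultimately show ?thesis by blast
qed

lemma exists_homogeneous_of_grouplike_degree:
  fixes v :: 'v
  assumes "v \<noteq> 0"
  shows "\<exists>r i u. u \<noteq> 0 \<and> co u = bsingle (gidx n w r i) u"
proof -
  obtain u where u: "u \<noteq> 0" "\<forall>t\<in>fsupp (co u). ydeg t = 0"
    using exists_coaction_in_y_degree_zero[OF assms] by blast
  have grouplike: "\<exists>k j. t = (k, j, 0) \<and> j < n" if "t \<in> fsupp (co u)" for t
    using u(2) valid_co that unfolding valid_idx_def by (metis prod.collapse)
  have "fsupp (co u) \<noteq> {}" using counit[of u] u(1) by auto
  then obtain h where h: "h \<in> fsupp (co u)" by blast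
  obtain k j where hkj: "h = (k, j, 0)" "j < n" using grouplike[OF h] by blast
  define u' where "u' = co u h"
  have "co u' t = bsingle h u' t" for t
  proof -
    have "co u' t = (\<Sum>p\<in>fsupp (co u). s (hDelta n w \<gamma> p (h, t)) (co u p))"
      unfolding u'_def by (rule coassoc[symmetric])
    also have "\<dots> = (\<Sum>p\<in>fsupp (co u). if p = h then bsingle h u' t else 0)"
    proof (rule sum.cong[OF refl])
      fix p assume "p \<in> fsupp (co u)"
      then obtain kp jp where "p = (kp, jp, 0)" "jp < n" using grouplike by blast
      then show "s (hDelta n w \<gamma> p (h, t)) (co u p) = (if p = h then bsingle h u' t else 0)"
        using n_pos by (auto simp: hDelta_grouplike bsingle_def u'_def)
    qed
    also have "\<dots> = bsingle h u' t" using h finite_co by simp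
    finally show ?thesis .
  qed
  moreover have "u' \<noteq> 0" using h by (simp add: u'_def fsupp_def)
  ultimately show ?thesis using gidx_eq[OF hkj(2)] hkj(1) by (metis ext)
qed

lemma exists_standard_elem:
  assumes ac: "alg_closed TYPE('k)" and fd: "fin_dim s" and nontrivial: "(UNIV :: 'v set) \<noteq> {0}"
  shows "\<exists>\<alpha> \<beta> r i v. standard_elem n w s act co \<alpha> \<beta> r i v"
proof -
  obtain r i u where u: "u \<noteq> 0" "co u = bsingle (gidx n w r i) u"
    using nontrivial exists_homogeneous_of_grouplike_degree by blast
  define E where "E = {x. co x = bsingle (gidx n w r i) x}"
  have "subspace E"
    using linear_map_0[OF linear_co] linear_map_add[OF linear_co] linear_map_scale[OF linear_co]
    by (auto simp: subspace_def E_def bsingle_def fun_eq_iff)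
  moreover have "act (gidx n w r' i') ` E \<subseteq> E" for r' i'
    using co_act_grouplike by (auto simp: E_def)
  moreover have "E \<noteq> {0}" using u by (auto simp: E_def)
  moreover obtain B where "finite B" "span B = UNIV" using fd unfolding fin_dim_def by blast
  moreover have
    "act (gidx n w 1 0) (act (gidx n w 0 1) x) = act (gidx n w 0 1) (act (gidx n w 1 0) x)" for x
    by (simp add: act_gidx_act_gidx)
  ultimately obtain v \<alpha> \<beta> where v: "v \<in> E" "v \<noteq> 0"
    "act (gidx n w 1 0) v = s \<alpha> v" "act (gidx n w 0 1) v = s \<beta> v"
    using common_eigenvector[OF ac _ _ linear_act linear_act] valid_gidx[OF n_pos] by metis
  then have "standard_elem n w s act co \<alpha> \<beta> r i v"
    using grouplike_eigenvalue_nonzero by (simp add: standard_elem_iff E_def)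
  then show ?thesis by blast
qed

end

section \<open>Isomorphism from a common standard element\<close>

definition YD_hom :: "nat \<Rightarrow> ('k::field \<Rightarrow> 'v::ab_group_add \<Rightarrow> 'v) \<Rightarrow> (idx \<Rightarrow> 'v \<Rightarrow> 'v) \<Rightarrow> ('v \<Rightarrow> idx \<Rightarrow> 'v)
    \<Rightarrow> ('k \<Rightarrow> 'u::ab_group_add \<Rightarrow> 'u) \<Rightarrow> (idx \<Rightarrow> 'u \<Rightarrow> 'u) \<Rightarrow> ('u \<Rightarrow> idx \<Rightarrow> 'u) \<Rightarrow> ('v \<Rightarrow> 'u) \<Rightarrow> bool" where
  "YD_hom n sV actV coV sW actW coW f \<longleftrightarrow>
     Vector_Spaces.linear sV sW f \<and>
     (\<forall>p v. valid_idx n p \<longrightarrow> f (actV p v) = actW p (f v)) \<and>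
     (\<forall>v t. f (coV v t) = coW (f v) t)"

lemma YD_iso_iff_bij_hom:
  "YD_iso n sV actV coV sW actW coW \<longleftrightarrow> (\<exists>f. bij f \<and> YD_hom n sV actV coV sW actW coW f)"
  by (auto simp: YD_iso_def YD_hom_def)

lemma YD_homD:
  assumes "YD_hom n sV actV coV sW actW coW f"
  shows "Vector_Spaces.linear sV sW f" "\<And>p x. valid_idx n p \<Longrightarrow> f (actV p x) = actW p (f x)"
    "\<And>x t. f (coV x t) = coW (f x) t"
  using assms unfolding YD_hom_def by blast+

lemma YD_submoduleD:
  assumes "YD_submodule n s act co U"
  shows "module.subspace s U" "\<And>p x. valid_idx n p \<Longrightarrow> x \<in> U \<Longrightarrow> act p x \<in> U"
    "\<And>x t. x \<in> U \<Longrightarrow> co x t \<in> U"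
  using assms unfolding YD_submodule_def by blast+

lemma YD_submodule_image:
  assumes f: "YD_hom n sV actV coV sW actW coW f" and U: "YD_submodule n sV actV coV U"
  shows "YD_submodule n sW actW coW (f ` U)"
  unfolding YD_submodule_def
proof (intro conjI allI impI)
  show "module.subspace sW (f ` U)"
    using module_hom.subspace_image[OF module_hom_linearI[OF YD_homD(1)[OF f]]]
      YD_submoduleD(1)[OF U] .
  show "actW p y \<in> f ` U" if p: "valid_idx n p" and y: "y \<in> f ` U" for p y
  proof -
    obtain x where x: "x \<in> U" "y = f x" using y by blast
    then have "actW p y = f (actV p x)" using YD_homD(2)[OF f p] by simp
    then show ?thesis using YD_submoduleD(2)[OF U p x(1)] by simp
  qed
  show "coW y t \<in> f ` U" if y: "y \<in> f ` U" for y t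
  proof -
    obtain x where x: "x \<in> U" "y = f x" using y by blast
    then have "coW y t = f (coV x t)" using YD_homD(3)[OF f] by simp
    then show ?thesis using YD_submoduleD(3)[OF U x(1)] by simp
  qed
qed

lemma YD_submodule_vimage:
  assumes f: "YD_hom n sV actV coV sW actW coW f" and U: "YD_submodule n sW actW coW U"
  shows "YD_submodule n sV actV coV (f -` U)"
  unfolding YD_submodule_def
proof (intro conjI allI impI)
  show "module.subspace sV (f -` U)"
    using module_hom.subspace_vimage[OF module_hom_linearI[OF YD_homD(1)[OF f]]]
      YD_submoduleD(1)[OF U] .
  show "actV p x \<in> f -` U" if p: "valid_idx n p" and x: "x \<in> f -` U" for p x
    using x YD_homD(2)[OF f p] YD_submoduleD(2)[OF U p] by simp
  show "coV x t \<in> f -` U" if x: "x \<in> f -` U" for x t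
    using x YD_homD(3)[OF f] YD_submoduleD(3)[OF U] by simp
qed

lemma standard_elem_hom:
  assumes V: "H_module n w \<gamma> sV actV" and W: "H_module n w \<gamma> sW actW"
    and f: "YD_hom n sV actV coV sW actW coW f" "inj f"
    and v: "standard_elem n w sV actV coV \<alpha> \<beta> r i v"
  shows "standard_elem n w sW actW coW \<alpha> \<beta> r i (f v)"
proof -
  have lin: "Vector_Spaces.linear sV sW f"
    and act: "\<And>p x. valid_idx n p \<Longrightarrow> f (actV p x) = actW p (f x)"
    and co: "\<And>x t. f (coV x t) = coW (f x) t"
    using YD_homD[OF f(1)] by blast+
  have v': "v \<noteq> 0" "\<alpha> \<noteq> 0" "\<beta> \<noteq> 0" "actV (gidx n w 1 0) v = sV \<alpha> v"
    "actV (gidx n w 0 1) v = sV \<beta> v" "coV v = bsingle (gidx n w r i) v"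
    using v H_module.standard_elem_iff[OF V] by simp_all
  have "f v \<noteq> 0" using v'(1) f(2) linear_map_0[OF lin] by (metis injD)
  moreover have "coW (f v) = bsingle (gidx n w r i) (f v)"
    using v'(6) co linear_map_0[OF lin] by (auto simp: bsingle_def fun_eq_iff simp flip: co)
  moreover have "actW (gidx n w 1 0) (f v) = sW \<alpha> (f v)" "actW (gidx n w 0 1) (f v) = sW \<beta> (f v)"
    using v'(4,5) act[OF valid_gidx[OF H_module.n_pos[OF V]]] linear_map_scale[OF lin] by metis+
  ultimately show ?thesis using v'(2,3) H_module.standard_elem_iff[OF W] by simp
qed

lemma YD_simpleD: "YD_simple n s act co \<Longrightarrow> YD_submodule n s act co U \<Longrightarrow> U = {0} \<or> U = UNIV"
  unfolding YD_simple_def by blast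

context
  fixes n w :: nat and \<gamma> :: "'k::field"
    and sV :: "'k \<Rightarrow> 'v::ab_group_add \<Rightarrow> 'v" and actV :: "idx \<Rightarrow> 'v \<Rightarrow> 'v" and coV :: "'v \<Rightarrow> idx \<Rightarrow> 'v"
    and sW :: "'k \<Rightarrow> 'u::ab_group_add \<Rightarrow> 'u" and actW :: "idx \<Rightarrow> 'u \<Rightarrow> 'u" and coW :: "'u \<Rightarrow> idx \<Rightarrow> 'u"
  assumes V: "YD_module n w \<gamma> sV actV coV" and W: "YD_module n w \<gamma> sW actW coW"
begin

interpretation V: YD_module n w \<gamma> sV actV coV by (fact V)
interpretation W: YD_module n w \<gamma> sW actW coW by (fact W)
interpretation P: YD_module n w \<gamma> "prod_scale sV sW" "prod_act actV actW" "prod_coact coV coW"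
  by (rule YD_module_prod[OF V W])

lemma YD_hom_fst:
  "YD_hom n (prod_scale sV sW) (prod_act actV actW) (prod_coact coV coW) sV actV coV fst"
  by (simp add: YD_hom_def Vector_Spaces.linear_iff P.vector_space V.vector_space
      prod_scale_def prod_act_def prod_coact_def)

lemma YD_hom_snd:
  "YD_hom n (prod_scale sV sW) (prod_act actV actW) (prod_coact coV coW) sW actW coW snd"
  by (simp add: YD_hom_def Vector_Spaces.linear_iff P.vector_space W.vector_space
      prod_scale_def prod_act_def prod_coact_def)

lemma YD_hom_inl:
  "YD_hom n sV actV coV (prod_scale sV sW) (prod_act actV actW) (prod_coact coV coW) (\<lambda>x. (x, 0))"
  by (simp add: YD_hom_def Vector_Spaces.linear_iff P.vector_space V.vector_space
      prod_scale_def prod_act_def prod_coact_def W.act_0 W.co_0)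

lemma YD_hom_inr:
  "YD_hom n sW actW coW (prod_scale sV sW) (prod_act actV actW) (prod_coact coV coW) (\<lambda>y. (0, y))"
  by (simp add: YD_hom_def Vector_Spaces.linear_iff P.vector_space W.vector_space
      prod_scale_def prod_act_def prod_coact_def V.act_0 V.co_0)

lemma YD_iso_of_graph:
  assumes S: "YD_submodule n (prod_scale sV sW) (prod_act actV actW) (prod_coact coV coW) S"
    and fst_S: "fst ` S = UNIV" and snd_S: "snd ` S = UNIV"
    and ker_fst: "(\<lambda>x. (x, 0)) -` S = {0}" and ker_snd: "(\<lambda>y. (0, y)) -` S = {0}"
  shows "YD_iso n sV actV coV sW actW coW"
proof -
  have sub: "P.subspace S" using YD_submoduleD(1)[OF S] .
  have unique: "y = y'" if "(x, y) \<in> S" "(x, y') \<in> S" for x y y'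
  proof -
    have "(x, y) - (x, y') \<in> S" using P.subspace_diff[OF sub that] .
    then have "y - y' \<in> (\<lambda>y. (0, y)) -` S" by simp
    then show ?thesis using ker_snd by simp
  qed
  define f where "f x = (THE y. (x, y) \<in> S)" for x
  have graph: "(x, f x) \<in> S" for x
  proof -
    have "x \<in> fst ` S" using fst_S by simp
    then obtain y where y: "(x, y) \<in> S" by force
    then show ?thesis unfolding f_def by (rule theI) (use unique[OF _ y] in blast)
  qed
  have f_eq: "f x = y" if "(x, y) \<in> S" for x y using unique[OF graph that] .
  have "inj f"
  proof (rule injI)
    fix x x' assume "f x = f x'"
    then have "x - x' \<in> (\<lambda>x. (x, 0)) -` S"
      using P.subspace_diff[OF sub graph graph, of x x'] by simp
    then show "x = x'" using ker_fst by simp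
  qed
  moreover have "y \<in> range f" for y
  proof -
    have "y \<in> snd ` S" using snd_S by simp
    then obtain x where "(x, y) \<in> S" by force
    then show ?thesis using f_eq by blast
  qed
  moreover have "YD_hom n sV actV coV sW actW coW f"
    unfolding YD_hom_def Vector_Spaces.linear_iff
  proof (intro conjI allI impI V.vector_space W.vector_space)
    show "f (x + y) = f x + f y" for x y
      using P.subspace_add[OF sub graph graph, of x y] by (intro f_eq) simp
    show "f (sV c x) = sW c (f x)" for c x
      using P.subspace_scale[OF sub graph, of c x] by (intro f_eq) (simp add: prod_scale_def)
    show "f (actV p x) = actW p (f x)" if "valid_idx n p" for p x
      using YD_submoduleD(2)[OF S that graph] by (intro f_eq) (simp add: prod_act_def)
    show "f (coV x t) = coW (f x) t" for x t
      using YD_submoduleD(3)[OF S graph] by (intro f_eq) (simp add: prod_coact_def)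
  qed
  ultimately show ?thesis unfolding YD_iso_iff_bij_hom by (blast intro: bijI surjI)
qed

lemma YD_iso_of_simple_submodule:
  assumes simple: "YD_simple n sV actV coV" "YD_simple n sW actW coW"
    and S: "YD_submodule n (prod_scale sV sW) (prod_act actV actW) (prod_coact coV coW) S"
    and vu: "(v, u) \<in> S" and v: "(v, 0) \<notin> S"
  shows "YD_iso n sV actV coV sW actW coW"
proof (rule YD_iso_of_graph[OF S])
  have sub: "P.subspace S" using YD_submoduleD(1)[OF S] .
  have "v \<noteq> 0" using v P.subspace_0[OF sub] by (auto simp: zero_prod_def)
  moreover have "v \<in> fst ` S" using vu by force
  ultimately show "fst ` S = UNIV"
    using YD_simpleD[OF simple(1) YD_submodule_image[OF YD_hom_fst S]] by blast
  have "u \<noteq> 0" using v vu by auto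
  moreover have "u \<in> snd ` S" using vu by force
  ultimately show "snd ` S = UNIV"
    using YD_simpleD[OF simple(2) YD_submodule_image[OF YD_hom_snd S]] by blast
  have "v \<notin> (\<lambda>x. (x, 0)) -` S" using v by simp
  then show "(\<lambda>x. (x, 0)) -` S = {0}"
    using YD_simpleD[OF simple(1) YD_submodule_vimage[OF YD_hom_inl S]] by blast
  have "(0, u) \<notin> S"
  proof
    assume "(0, u) \<in> S"
    then have "(v, u) - (0, u) \<in> S" using P.subspace_diff[OF sub vu] by blast
    then show False using v by simp
  qed
  then show "(\<lambda>y. (0, y)) -` S = {0}"
    using YD_simpleD[OF simple(2) YD_submodule_vimage[OF YD_hom_inr S]] by blast
qed

lemma YD_iso_of_common_standard_elem:
  assumes prim: "primitive_root n \<gamma>"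
    and simple: "YD_simple n sV actV coV" "YD_simple n sW actW coW"
    and v: "standard_elem n w sV actV coV \<alpha> \<beta> r i v"
    and u: "standard_elem n w sW actW coW \<alpha> \<beta> r i u"
  shows "YD_iso n sV actV coV sW actW coW"
proof -
  have v': "v \<noteq> 0" "\<alpha> \<noteq> 0" "\<beta> \<noteq> 0" "actV (gidx n w 1 0) v = sV \<alpha> v"
    "actV (gidx n w 0 1) v = sV \<beta> v" "coV v = bsingle (gidx n w r i) v"
    using v V.standard_elem_iff by simp_all
  have u': "u \<noteq> 0" "actW (gidx n w 1 0) u = sW \<alpha> u"
    "actW (gidx n w 0 1) u = sW \<beta> u" "coW u = bsingle (gidx n w r i) u"
    using u W.standard_elem_iff by simp_all
  define z where "z = (v, u)"
  define S where "S = P.span (H_orbit n (prod_act actV actW) z)"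
  have x_z: "prod_act actV actW (gidx n w 1 0) z = prod_scale sV sW \<alpha> z"
    and g_z: "prod_act actV actW (gidx n w 0 1) z = prod_scale sV sW \<beta> z"
    using v' u' by (simp_all add: z_def prod_act_def prod_scale_def)
  have "prod_coact coV coW z = bsingle (gidx n w r i) z"
    using v'(6) u'(4) by (simp add: z_def prod_coact_def fun_eq_iff bsingle_def zero_prod_def)
  then have S: "YD_submodule n (prod_scale sV sW) (prod_act actV actW) (prod_coact coV coW) S"
    unfolding S_def by (rule P.YD_submodule_H_orbit_span)
  have "z \<in> S" unfolding S_def by (rule P.span_base[OF P.self_in_H_orbit])
  moreover have "(v, 0) \<notin> S"
  proof
    assume "(v, 0) \<in> S"
    moreover have "prod_act actV actW (gidx n w 0 1) (v, 0) = prod_scale sV sW \<beta> (v, 0)"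
      using v'(5) W.act_0[OF valid_gidx[OF W.n_pos]] by (simp add: prod_act_def prod_scale_def)
    ultimately obtain c where "(v, 0) = prod_scale sV sW c z"
      using P.g_eigenvector_in_H_orbit_span[OF x_z g_z v'(2) prim v'(3)] unfolding S_def by blast
    then have "v = sV c v" "sW c u = 0" by (simp_all add: z_def prod_scale_def)
    then show False using v'(1) u'(1) by simp
  qed
  ultimately show ?thesis using YD_iso_of_simple_submodule[OF simple S] unfolding z_def by blast
qed

lemma common_standard_elem_of_YD_iso:
  assumes ac: "alg_closed TYPE('k)" and fd: "fin_dim sV" and nontrivial: "(UNIV :: 'v set) \<noteq> {0}"
    and iso: "YD_iso n sV actV coV sW actW coW"
  shows "\<exists>\<alpha> \<beta> r i v u. standard_elem n w sV actV coV \<alpha> \<beta> r i v \<and>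
    standard_elem n w sW actW coW \<alpha> \<beta> r i u"
proof -
  obtain f where f: "bij f" "YD_hom n sV actV coV sW actW coW f"
    using iso unfolding YD_iso_iff_bij_hom by blast
  obtain \<alpha> \<beta> r i v where v: "standard_elem n w sV actV coV \<alpha> \<beta> r i v"
    using V.exists_standard_elem[OF ac fd nontrivial] by blast
  moreover have "standard_elem n w sW actW coW \<alpha> \<beta> r i (f v)"
    by (rule standard_elem_hom[OF V.H_module_axioms W.H_module_axioms f(2) bij_is_inj[OF f(1)] v])
  ultimately show ?thesis by blast
qed

end

theorem corollary3p21:
  fixes n w :: nat and \<gamma> :: "'k::field_char_0"
    and sV :: "'k \<Rightarrow> 'v::ab_group_add \<Rightarrow> 'v" and actV :: "idx \<Rightarrow> 'v \<Rightarrow> 'v" and coV :: "'v \<Rightarrow> idx \<Rightarrow> 'v"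
    and sW :: "'k \<Rightarrow> 'u::ab_group_add \<Rightarrow> 'u" and actW :: "idx \<Rightarrow> 'u \<Rightarrow> 'u" and coW :: "'u \<Rightarrow> idx \<Rightarrow> 'u"
  assumes "alg_closed TYPE('k)"
    and "0 < n" and "0 < w" and "primitive_root n \<gamma>"
    and "is_YD n w \<gamma> sV actV coV" and "fin_dim sV" and "YD_simple n sV actV coV"
    and "is_YD n w \<gamma> sW actW coW" and "fin_dim sW" and "YD_simple n sW actW coW"
  shows "YD_iso n sV actV coV sW actW coW \<longleftrightarrow>
    (\<exists>\<alpha> \<beta> r i. \<alpha> \<noteq> 0 \<and> \<beta> \<noteq> 0 \<and>
       (\<exists>v. standard_elem n w sV actV coV \<alpha> \<beta> r i v) \<and>
       (\<exists>u. standard_elem n w sW actW coW \<alpha> \<beta> r i u))"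
proof -
  have \<gamma>: "\<gamma> \<noteq> 0" using assms(2,4) unfolding primitive_root_def by (auto simp: power_0_left)
  have V: "YD_module n w \<gamma> sV actV coV" and W: "YD_module n w \<gamma> sW actW coW"
    using YD_moduleI[OF assms(2) \<gamma>] assms(5,8) by blast+
  have "(UNIV :: 'v set) \<noteq> {0}" using assms(7) unfolding YD_simple_def by blast
  then have "YD_iso n sV actV coV sW actW coW \<Longrightarrow> \<exists>\<alpha> \<beta> r i v u.
      standard_elem n w sV actV coV \<alpha> \<beta> r i v \<and> standard_elem n w sW actW coW \<alpha> \<beta> r i u"
    using common_standard_elem_of_YD_iso[OF V W assms(1,6)] by blast
  moreover have "standard_elem n w sV actV coV \<alpha> \<beta> r i v \<Longrightarrow>
      standard_elem n w sW actW coW \<alpha> \<beta> r i u \<Longrightarrow> YD_iso n sV actV coV sW actW coW"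
    for \<alpha> \<beta> r i v u
    using YD_iso_of_common_standard_elem[OF V W assms(4,7,10)] .
  moreover have "standard_elem n w sV actV coV \<alpha> \<beta> r i v \<Longrightarrow> \<alpha> \<noteq> 0 \<and> \<beta> \<noteq> 0" for \<alpha> \<beta> r i v
    by (simp add: standard_elem_def)
  ultimately show ?thesis by blast
qed

end
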